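(* For each $\{\cup,\cap,\bot,\{0\},\min,\max,l,r\}$-formula $\phi(\bar{X})$ there is a $\{\cup,\cap,\bot,\{0\},\min,\max,\mathrm{ips}\}$-formula $\psi(\bar{Y})$ such that for each tuple $\bar{A}$ of finite unions of closed intervals of $I$, \[ L(I) \models \phi(\bar{A}) \Longleftrightarrow W(I) \models \psi(\overline{l(A)},\overline{r(A)}), \] where $l(A)$ and $r(A)$ denote the sets of left and right endpoints of $A$.
   Context: Let $I$ be a dense linear order with a left endpoint $0$ and no right endpoint. $W(I)$ is the structure in the signature $\{\cup,\cap,\bot,\{0\},\min,\max,\mathrm{ips}\}$ whose universe is the collection of finite subsets of $I$, with $\cup,\cap$ union and intersection, $\bot$ the empty set, the constant $\{0\}$ interpreted as the singleton of the left endpoint, $\min$ and $\max$ sending a nonempty finite set to the singleton of its minimum (resp. maximum) and fixing $\emptyset$, and $\mathrm{ips}$ the binary function $\mathrm{ips}(A,B)=\{i\in A : \text{the successor of } i \text{ in } A \text{ (in the induced order) exists and lies in } B\}$. $L(I)$ is the structure in the signature $\{\cup,\cap,\bot,\{0\},\min,\max,l,r\}$ whose universe is the collection of finite unions of closed intervals of $I$ (closed intervals being sets of the form $[i,j]$, $[i,+\infty)$, $(-\infty,j]$), with $\cup,\cap$ union and intersection, $\bot$ the empty set, $\{0\}$ the singleton of the left endpoint, $\min$ and $\max$ sending a set to the singleton of its minimum (resp. maximum), with $\min(\emptyset)=\max(\emptyset)=\emptyset$ and $\max(A)=\emptyset$ for unbounded $A$, and $l$, $r$ sending a set to the set of its left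 (resp. right) endpoints. *)

theory Defs
  imports Main
begin

text \<open>The order I is modelled by a type 'a of class
  dense_linorder + order_bot + no_top: a dense linear order with left endpoint
  bot (the element 0) and no right endpoint.\<close>

definition closed_interval :: "'a::linorder set \<Rightarrow> bool" where
  "closed_interval S \<longleftrightarrow>
     (\<exists>i j. i \<le> j \<and> S = {i..j}) \<or> (\<exists>i. S = {i..}) \<or> (\<exists>j. S = {..j})"

definition Lset :: "'a::linorder set set" where
  "Lset = {A. \<exists>F. finite F \<and> (\<forall>S\<in>F. closed_interval S) \<and> A = \<Union>F}"

definition Wset :: "'a set set" where
  "Wset = {A. finite A}"

definition min_set :: "'a::linorder set \<Rightarrow> 'a set" where
  "min_set A = (if \<exists>m\<in>A. \<forall>x\<in>A. m \<le> x then {LEAST x. x \<in> A} else {})"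

definition max_set :: "'a::linorder set \<Rightarrow> 'a set" where
  "max_set A = (if \<exists>m\<in>A. \<forall>x\<in>A. x \<le> m then {GREATEST x. x \<in> A} else {})"

definition lend :: "'a::linorder set \<Rightarrow> 'a set" where
  "lend A = {x \<in> A. \<not> (\<exists>y<x. {y..x} \<subseteq> A)}"

definition rend :: "'a::linorder set \<Rightarrow> 'a set" where
  "rend A = {x \<in> A. \<not> (\<exists>y>x. {x..y} \<subseteq> A)}"

definition ips :: "'a::linorder set \<Rightarrow> 'a set \<Rightarrow> 'a set" where
  "ips A B = {i \<in> A. \<exists>j\<in>A. i < j \<and> (\<forall>k\<in>A. i < k \<longrightarrow> j \<le> k) \<and> j \<in> B}"

datatype ltm = LVar nat | LUn ltm ltm | LInt ltm ltm | LBot | LZero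
  | LMin ltm | LMax ltm | LL ltm | LR ltm

datatype wtm = WVar nat | WUn wtm wtm | WInt wtm wtm | WBot | WZero
  | WMin wtm | WMax wtm | WIps wtm wtm

datatype 'tm fm = Eq 'tm 'tm | Neg "'tm fm" | Conj "'tm fm" "'tm fm"
  | Disj "'tm fm" "'tm fm" | Ex nat "'tm fm" | All nat "'tm fm"

fun Leval :: "(nat \<Rightarrow> 'a::{linorder,order_bot} set) \<Rightarrow> ltm \<Rightarrow> 'a set" where
  "Leval \<sigma> (LVar n) = \<sigma> n"
| "Leval \<sigma> (LUn s t) = Leval \<sigma> s \<union> Leval \<sigma> t"
| "Leval \<sigma> (LInt s t) = Leval \<sigma> s \<inter> Leval \<sigma> t"
| "Leval \<sigma> LBot = {}"
| "Leval \<sigma> LZero = {bot}"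
| "Leval \<sigma> (LMin t) = min_set (Leval \<sigma> t)"
| "Leval \<sigma> (LMax t) = max_set (Leval \<sigma> t)"
| "Leval \<sigma> (LL t) = lend (Leval \<sigma> t)"
| "Leval \<sigma> (LR t) = rend (Leval \<sigma> t)"

fun Weval :: "(nat \<Rightarrow> 'a::{linorder,order_bot} set) \<Rightarrow> wtm \<Rightarrow> 'a set" where
  "Weval \<sigma> (WVar n) = \<sigma> n"
| "Weval \<sigma> (WUn s t) = Weval \<sigma> s \<union> Weval \<sigma> t"
| "Weval \<sigma> (WInt s t) = Weval \<sigma> s \<inter> Weval \<sigma> t"
| "Weval \<sigma> WBot = {}"
| "Weval \<sigma> WZero = {bot}"
| "Weval \<sigma> (WMin t) = min_set (Weval \<sigma> t)"
| "Weval \<sigma> (WMax t) = max_set (Weval \<sigma> t)"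
| "Weval \<sigma> (WIps s t) = ips (Weval \<sigma> s) (Weval \<sigma> t)"

fun Lsat :: "(nat \<Rightarrow> 'a::{linorder,order_bot} set) \<Rightarrow> ltm fm \<Rightarrow> bool" where
  "Lsat \<sigma> (Eq s t) \<longleftrightarrow> Leval \<sigma> s = Leval \<sigma> t"
| "Lsat \<sigma> (Neg \<phi>) \<longleftrightarrow> \<not> Lsat \<sigma> \<phi>"
| "Lsat \<sigma> (Conj \<phi> \<psi>) \<longleftrightarrow> Lsat \<sigma> \<phi> \<and> Lsat \<sigma> \<psi>"
| "Lsat \<sigma> (Disj \<phi> \<psi>) \<longleftrightarrow> Lsat \<sigma> \<phi> \<or> Lsat \<sigma> \<psi>"
| "Lsat \<sigma> (Ex x \<phi>) \<longleftrightarrow> (\<exists>A\<in>Lset. Lsat (\<sigma>(x := A)) \<phi>)"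
| "Lsat \<sigma> (All x \<phi>) \<longleftrightarrow> (\<forall>A\<in>Lset. Lsat (\<sigma>(x := A)) \<phi>)"

fun Wsat :: "(nat \<Rightarrow> 'a::{linorder,order_bot} set) \<Rightarrow> wtm fm \<Rightarrow> bool" where
  "Wsat \<sigma> (Eq s t) \<longleftrightarrow> Weval \<sigma> s = Weval \<sigma> t"
| "Wsat \<sigma> (Neg \<phi>) \<longleftrightarrow> \<not> Wsat \<sigma> \<phi>"
| "Wsat \<sigma> (Conj \<phi> \<psi>) \<longleftrightarrow> Wsat \<sigma> \<phi> \<and> Wsat \<sigma> \<psi>"
| "Wsat \<sigma> (Disj \<phi> \<psi>) \<longleftrightarrow> Wsat \<sigma> \<phi> \<or> Wsat \<sigma> \<psi>"
| "Wsat \<sigma> (Ex x \<phi>) \<longleftrightarrow> (\<exists>A\<in>Wset. Wsat (\<sigma>(x := A)) \<phi>)"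
| "Wsat \<sigma> (All x \<phi>) \<longleftrightarrow> (\<forall>A\<in>Wset. Wsat (\<sigma>(x := A)) \<phi>)"

definition endpoint_asg :: "(nat \<Rightarrow> 'a::linorder set) \<Rightarrow> nat \<Rightarrow> 'a set" where
  "endpoint_asg \<sigma> k = (if even k then lend (\<sigma> (k div 2)) else rend (\<sigma> (k div 2)))"

end

theory Submission
  imports Defs
begin

text \<open>A finite union of closed intervals A of a dense order is determined by its endpoint sets:
  x \<in> A iff some left endpoint l \<le> x is not followed by a right endpoint in [l, x).
  Finiteness and density make this work: leaving A to the right always passes a right endpoint,
  and every point of A is reached from a left endpoint through A. Conversely, every pair of finite
  sets decodes in this way to an element of L(I). Hence an L(I)-variable can be represented by the
  two W(I)-variables holding its endpoint sets, and a quantifier over L(I) by two quantifiers over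
  finite sets. Since points are definable in W(I) as the nonempty fixed points of min, membership
  of a point in an L(I)-term can be written as a W(I)-formula by recursion on the term, and an
  equation between terms becomes pointwise equivalence of membership.\<close>

definition interval_union :: "('a::linorder \<times> 'a) set \<Rightarrow> 'a set \<Rightarrow> 'a set" where
  "interval_union P Q = (\<Union>(i, j)\<in>P. {i..j}) \<union> (\<Union>i\<in>Q. {i..})"

lemma mem_interval_union:
  "x \<in> interval_union P Q \<longleftrightarrow> (\<exists>i j. (i, j) \<in> P \<and> i \<le> x \<and> x \<le> j) \<or> (\<exists>i\<in>Q. i \<le> x)"
  unfolding interval_union_def by fastforce

lemma interval_subset_interval_union:
  "(i, j) \<in> P \<Longrightarrow> i \<le> u \<Longrightarrow> v \<le> j \<Longrightarrow> {u..v} \<subseteq> interval_union P Q"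
  unfolding subset_iff mem_interval_union by force

lemma ray_interval_subset_interval_union:
  "i \<in> Q \<Longrightarrow> i \<le> u \<Longrightarrow> {u..v} \<subseteq> interval_union P Q"
  unfolding subset_iff mem_interval_union by force

lemma Lset_imp_interval_union:
  fixes A :: "'a::{linorder,order_bot} set"
  assumes "A \<in> Lset"
  obtains P Q where "finite P" "finite Q" "A = interval_union P Q"
proof -
  obtain F where F: "finite F" "\<forall>S\<in>F. closed_interval S" "A = \<Union>F"
    using assms unfolding Lset_def by blast
  have "\<exists>P Q. finite P \<and> finite Q \<and> \<Union>F = interval_union P Q"
    using F(1,2)
  proof (induction F rule: finite_induct)
    case empty
    show ?case by (auto simp: interval_union_def)
  next
    case (insert S F)
    then obtain P Q where PQ: "finite P" "finite Q" "\<Union>F = interval_union P Q" by auto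
    have "{..j} = {bot..j}" for j :: 'a by auto
    with insert.prems consider (bounded) i j where "S = {i..j}" | (ray) i where "S = {i..}"
      unfolding closed_interval_def by auto
    then show ?case
    proof cases
      case bounded
      with PQ show ?thesis
        by (intro exI[of _ "insert (i, j) P"] exI[of _ Q]) (auto simp: interval_union_def)
    next
      case ray
      with PQ show ?thesis
        by (intro exI[of _ P] exI[of _ "insert i Q"]) (auto simp: interval_union_def)
    qed
  qed
  with F(3) that show ?thesis by blast
qed

lemma interval_union_right_nbhd:
  fixes x :: "'a::dense_linorder"
  assumes "finite P" "finite Q" "x < y" "{x..y} \<subseteq> interval_union P Q"
  shows "(\<exists>i j. (i, j) \<in> P \<and> i \<le> x \<and> x < j) \<or> (\<exists>i\<in>Q. i \<le> x)"
proof -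
  define m where "m = Min (insert y {i \<in> fst ` P \<union> Q. x < i})"
  have fin: "finite (insert y {i \<in> fst ` P \<union> Q. x < i})" using assms(1,2) by auto
  have "x < m" unfolding m_def using fin assms(3) by auto
  then obtain z where z: "x < z" "z < m" using dense by blast
  have m_le: "m \<le> i" if "i \<in> fst ` P \<union> Q" "x < i" for i
    unfolding m_def using fin that by auto
  have "m \<le> y" unfolding m_def using fin by auto
  with z have "z \<in> {x..y}" by auto
  with assms(4) have "z \<in> interval_union P Q" by blast
  then consider (bounded) i j where "(i, j) \<in> P" "i \<le> z" "z \<le> j"
    | (ray) i where "i \<in> Q" "i \<le> z"
    unfolding mem_interval_union by blast
  then show ?thesis
  proof cases
    case bounded
    then have "i \<in> fst ` P \<union> Q" by force
    with m_le z bounded have "i \<le> x" by (meson le_less_trans not_le)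
    moreover have "x < j" using z bounded by (meson less_le_trans)
    ultimately show ?thesis using bounded by blast
  next
    case ray
    with m_le z have "i \<le> x" by (meson UnI2 le_less_trans not_le)
    with ray show ?thesis by auto
  qed
qed

lemma interval_union_left_nbhd:
  fixes x :: "'a::dense_linorder"
  assumes "finite P" "finite Q" "y < x" "{y..x} \<subseteq> interval_union P Q"
  shows "(\<exists>i j. (i, j) \<in> P \<and> i < x \<and> x \<le> j) \<or> (\<exists>i\<in>Q. i < x)"
proof -
  define m where "m = Max (insert y {j \<in> snd ` P. j < x})"
  have fin: "finite (insert y {j \<in> snd ` P. j < x})" using assms(1) by auto
  have "m < x" unfolding m_def using fin assms(3) by auto
  then obtain z where z: "m < z" "z < x" using dense by blast
  have le_m: "j \<le> m" if "j \<in> snd ` P" "j < x" for j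
    unfolding m_def using fin that by auto
  have "y \<le> m" unfolding m_def using fin by auto
  with z have "z \<in> {y..x}" by auto
  with assms(4) have "z \<in> interval_union P Q" by blast
  then consider (bounded) i j where "(i, j) \<in> P" "i \<le> z" "z \<le> j"
    | (ray) i where "i \<in> Q" "i \<le> z"
    unfolding mem_interval_union by blast
  then show ?thesis
  proof cases
    case bounded
    then have "j \<in> snd ` P" by force
    with le_m z bounded have "x \<le> j" by (meson le_less_trans not_le)
    moreover have "i < x" using z bounded by (meson le_less_trans)
    ultimately show ?thesis using bounded by blast
  next
    case ray
    with z show ?thesis by (meson le_less_trans)
  qed
qed

lemma lend_interval_union_subset: "lend (interval_union P Q) \<subseteq> fst ` P \<union> Q"
proof
  fix x assume x: "x \<in> lend (interval_union P Q)"
  then consider (bounded) i j where "(i, j) \<in> P" "i \<le> x" "x \<le> j"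
    | (ray) i where "i \<in> Q" "i \<le> x"
    unfolding lend_def mem_interval_union by blast
  then show "x \<in> fst ` P \<union> Q"
  proof cases
    case bounded
    then have "{i..x} \<subseteq> interval_union P Q" by (intro interval_subset_interval_union) auto
    with x bounded have "i = x" unfolding lend_def by force
    with bounded show ?thesis by force
  next
    case ray
    then have "{i..x} \<subseteq> interval_union P Q" by (intro ray_interval_subset_interval_union) auto
    with x ray have "i = x" unfolding lend_def by force
    with ray show ?thesis by force
  qed
qed

lemma rend_interval_union_subset:
  fixes P :: "('a::{linorder,no_top} \<times> 'a) set"
  shows "rend (interval_union P Q) \<subseteq> snd ` P"
proof
  fix x assume x: "x \<in> rend (interval_union P Q)"
  then consider (bounded) i j where "(i, j) \<in> P" "i \<le> x" "x \<le> j"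
    | (ray) i where "i \<in> Q" "i \<le> x"
    unfolding rend_def mem_interval_union by blast
  then show "x \<in> snd ` P"
  proof cases
    case bounded
    then have "{x..j} \<subseteq> interval_union P Q" by (intro interval_subset_interval_union) auto
    with x bounded have "j = x" unfolding rend_def by force
    with bounded show ?thesis by force
  next
    case ray
    obtain y where "x < y" using gt_ex by blast
    moreover from ray have "{x..y} \<subseteq> interval_union P Q"
      by (intro ray_interval_subset_interval_union) auto
    ultimately show ?thesis using x unfolding rend_def by blast
  qed
qed

lemma rend_interval_union_between:
  fixes P :: "('a::dense_linorder \<times> 'a) set" and Q :: "'a set"
  defines "A \<equiv> interval_union P Q"
  assumes "finite P" "finite Q" "a \<in> A" "a \<le> b" "b \<notin> A"
  shows "\<exists>r\<in>rend A. a \<le> r \<and> r < b"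
proof -
  define T where "T = {j \<in> snd ` P. a \<le> j \<and> j < b \<and> {a..j} \<subseteq> A}"
  have "finite T" unfolding T_def using assms(2) by auto
  have "T \<noteq> {}"
  proof -
    from \<open>a \<in> A\<close> obtain i j where ij: "(i, j) \<in> P" "i \<le> a" "a \<le> j"
      using assms(5,6) ray_interval_subset_interval_union[of _ Q a b P]
      unfolding A_def mem_interval_union by fastforce
    then have "j < b"
      using assms(5,6) interval_subset_interval_union[of i j P a b Q] unfolding A_def
      by (meson atLeastAtMost_iff dual_order.refl not_le subsetD)
    moreover have "{a..j} \<subseteq> A"
      using ij unfolding A_def by (simp add: interval_subset_interval_union)
    moreover have "j \<in> snd ` P" using ij(1) by force
    ultimately have "j \<in> T" unfolding T_def using ij by blast
    then show ?thesis by blast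
  qed
  define r where "r = Max T"
  have "r \<in> T" unfolding r_def using \<open>finite T\<close> \<open>T \<noteq> {}\<close> by (rule Max_in)
  then have r: "a \<le> r" "r < b" "{a..r} \<subseteq> A" unfolding T_def by auto
  have "r \<in> rend A"
  proof (rule ccontr)
    assume "r \<notin> rend A"
    with r obtain y where "r < y" "{r..y} \<subseteq> A" unfolding rend_def by auto
    then have "(\<exists>i j. (i, j) \<in> P \<and> i \<le> r \<and> r < j) \<or> (\<exists>i\<in>Q. i \<le> r)"
      unfolding A_def by (rule interval_union_right_nbhd[OF assms(2,3)])
    then consider (bounded) i j where "(i, j) \<in> P" "i \<le> r" "r < j" | (ray) i where "i \<in> Q" "i \<le> r"
      by blast
    then show False
    proof cases
      case bounded
      have "j < b"
      proof (rule ccontr)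
        assume "\<not> j < b"
        with bounded r have "{b..b} \<subseteq> A"
          unfolding A_def by (intro interval_subset_interval_union[OF bounded(1)]) order+
        with assms(6) show False by simp
      qed
      have "{a..j} \<subseteq> {a..r} \<union> {i..j}" using bounded by auto
      also have "\<dots> \<subseteq> A"
        using r(3) interval_subset_interval_union[OF bounded(1), of i j Q] unfolding A_def by blast
      finally have "j \<in> T" unfolding T_def using bounded r \<open>j < b\<close> by force
      then show False using Max_ge[OF \<open>finite T\<close>] bounded(3) unfolding r_def by fastforce
    next
      case ray
      with r have "{b..b} \<subseteq> A"
        unfolding A_def by (intro ray_interval_subset_interval_union[OF ray(1)]) order
      with assms(6) show False by simp
    qed
  qed
  with r show ?thesis by blast
qed

lemma lend_interval_union_below:
  fixes P :: "('a::dense_linorder \<times> 'a) set" and Q :: "'a set"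
  defines "A \<equiv> interval_union P Q"
  assumes "finite P" "finite Q" "x \<in> A"
  shows "\<exists>l\<in>lend A. l \<le> x \<and> {l..x} \<subseteq> A"
proof -
  define T where "T = {i \<in> fst ` P \<union> Q. i \<le> x \<and> {i..x} \<subseteq> A}"
  have "finite T" unfolding T_def using assms(2,3) by auto
  have "T \<noteq> {}"
  proof -
    from \<open>x \<in> A\<close> consider (bounded) i j where "(i, j) \<in> P" "i \<le> x" "x \<le> j"
      | (ray) i where "i \<in> Q" "i \<le> x"
      unfolding A_def mem_interval_union by blast
    then show ?thesis
    proof cases
      case bounded
      then have "{i..x} \<subseteq> A" unfolding A_def by (simp add: interval_subset_interval_union)
      moreover have "i \<in> fst ` P" using bounded(1) by force
      ultimately show ?thesis unfolding T_def using bounded by blast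
    next
      case ray
      then have "{i..x} \<subseteq> A" unfolding A_def by (simp add: ray_interval_subset_interval_union)
      with ray show ?thesis unfolding T_def by blast
    qed
  qed
  define l where "l = Min T"
  have "l \<in> T" unfolding l_def using \<open>finite T\<close> \<open>T \<noteq> {}\<close> by (rule Min_in)
  then have l: "l \<le> x" "{l..x} \<subseteq> A" unfolding T_def by auto
  have "l \<in> lend A"
  proof (rule ccontr)
    assume "l \<notin> lend A"
    with l obtain y where "y < l" "{y..l} \<subseteq> A" unfolding lend_def by auto
    then have "(\<exists>i j. (i, j) \<in> P \<and> i < l \<and> l \<le> j) \<or> (\<exists>i\<in>Q. i < l)"
      unfolding A_def by (rule interval_union_left_nbhd[OF assms(2,3)])
    then consider (bounded) i j where "(i, j) \<in> P" "i < l" "l \<le> j" | (ray) i where "i \<in> Q" "i < l"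
      by blast
    then obtain i where "i \<in> fst ` P \<union> Q" "i < l" "{i..x} \<subseteq> A"
    proof cases
      case bounded
      have "{i..x} \<subseteq> {i..j} \<union> {l..x}" using bounded by auto
      then have "{i..x} \<subseteq> A"
        using l(2) interval_subset_interval_union[OF bounded(1), of i j Q] unfolding A_def by blast
      with bounded that show ?thesis by force
    next
      case ray
      then show ?thesis
        using that ray_interval_subset_interval_union[of i Q i x P] unfolding A_def by blast
    qed
    then have "i \<in> T" unfolding T_def using l by auto
    then show False using Min_le[OF \<open>finite T\<close>] \<open>i < l\<close> unfolding l_def by fastforce
  qed
  with l show ?thesis by blast
qed

definition decode_endpoints :: "'a::linorder set \<Rightarrow> 'a set \<Rightarrow> 'a set" where
  "decode_endpoints L R = {x. \<exists>l\<in>L. l \<le> x \<and> (\<forall>r\<in>R. l \<le> r \<longrightarrow> x \<le> r)}"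

lemma decode_endpoints_in_Lset:
  assumes "finite L" "finite R"
  shows "decode_endpoints L R \<in> Lset"
proof -
  define J where "J l = (if R \<inter> {l..} = {} then {l..} else {l..Min (R \<inter> {l..})})" for l
  have "closed_interval (J l)" for l
    unfolding J_def closed_interval_def using assms(2) by auto
  moreover
  have "x \<in> J l \<longleftrightarrow> l \<le> x \<and> (\<forall>r\<in>R. l \<le> r \<longrightarrow> x \<le> r)" for l x
    unfolding J_def using assms(2) by (auto simp: Min_ge_iff)
  then have "decode_endpoints L R = \<Union>(J ` L)"
    unfolding decode_endpoints_def by blast
  ultimately show ?thesis unfolding Lset_def using assms(1) by blast
qed

lemma finite_lend:
  fixes A :: "'a::{linorder,order_bot} set"
  assumes "A \<in> Lset"
  shows "finite (lend A)"
proof -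
  obtain P Q where "finite P" "finite Q" "A = interval_union P Q"
    using assms by (rule Lset_imp_interval_union)
  then show ?thesis using lend_interval_union_subset finite_subset by blast
qed

lemma finite_rend:
  fixes A :: "'a::{linorder,order_bot,no_top} set"
  assumes "A \<in> Lset"
  shows "finite (rend A)"
proof -
  obtain P Q where "finite P" "finite Q" "A = interval_union P Q"
    using assms by (rule Lset_imp_interval_union)
  then show ?thesis using rend_interval_union_subset finite_subset by blast
qed

lemma decode_endpoints_lend_rend:
  fixes A :: "'a::{dense_linorder,order_bot} set"
  assumes "A \<in> Lset"
  shows "decode_endpoints (lend A) (rend A) = A"
proof -
  obtain P Q where PQ: "finite P" "finite Q" "A = interval_union P Q"
    using assms by (rule Lset_imp_interval_union)
  show ?thesis
  proof (intro set_eqI iffI)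
    fix x assume "x \<in> decode_endpoints (lend A) (rend A)"
    then obtain l where l: "l \<in> lend A" "l \<le> x" "\<forall>r\<in>rend A. l \<le> r \<longrightarrow> x \<le> r"
      unfolding decode_endpoints_def by blast
    show "x \<in> A"
    proof (rule ccontr)
      assume "x \<notin> A"
      moreover have "l \<in> A" using l(1) unfolding lend_def by blast
      ultimately show False
        using rend_interval_union_between[OF PQ(1,2), of l x] l(2,3) PQ(3) by force
    qed
  next
    fix x assume "x \<in> A"
    then obtain l where l: "l \<in> lend A" "l \<le> x" "{l..x} \<subseteq> A"
      using lend_interval_union_below[OF PQ(1,2)] PQ(3) by blast
    have "x \<le> r" if "r \<in> rend A" "l \<le> r" for r
    proof (rule ccontr)
      assume "\<not> x \<le> r"
      have "{r..x} \<subseteq> {l..x}" using that(2) by auto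
      with l(3) have "{r..x} \<subseteq> A" by blast
      with \<open>\<not> x \<le> r\<close> \<open>r \<in> rend A\<close> show False unfolding rend_def by auto
    qed
    with l show "x \<in> decode_endpoints (lend A) (rend A)" unfolding decode_endpoints_def by blast
  qed
qed

lemma Lset_eq_decode_endpoints:
  "(Lset :: 'a::{dense_linorder,order_bot,no_top} set set) =
     {decode_endpoints L R | L R. finite L \<and> finite R}"
proof (intro set_eqI iffI)
  fix A :: "'a set"
  assume "A \<in> Lset"
  then show "A \<in> {decode_endpoints L R | L R. finite L \<and> finite R}"
    using decode_endpoints_lend_rend finite_lend finite_rend by fastforce
qed (auto intro: decode_endpoints_in_Lset)

lemma bex_Lset_iff:
  "(\<exists>A\<in>(Lset :: 'a::{dense_linorder,order_bot,no_top} set set). P A) \<longleftrightarrow>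
     (\<exists>L R. finite L \<and> finite R \<and> P (decode_endpoints L R))"
  by (auto simp: Lset_eq_decode_endpoints)

lemma ball_Lset_iff:
  "(\<forall>A\<in>(Lset :: 'a::{dense_linorder,order_bot,no_top} set set). P A) \<longleftrightarrow>
     (\<forall>L R. finite L \<longrightarrow> finite R \<longrightarrow> P (decode_endpoints L R))"
  by (auto simp: Lset_eq_decode_endpoints)

lemma min_set_eq: "min_set A = {x \<in> A. \<forall>y\<in>A. x \<le> y}"
proof (cases "\<exists>m\<in>A. \<forall>x\<in>A. m \<le> x")
  case True
  then obtain m where "m \<in> A" "\<forall>x\<in>A. m \<le> x" by blast
  moreover from this have "(LEAST x. x \<in> A) = m" by (intro Least_equality) auto
  ultimately show ?thesis unfolding min_set_def by (auto intro: order.antisym)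
qed (auto simp: min_set_def)

lemma max_set_eq: "max_set A = {x \<in> A. \<forall>y\<in>A. y \<le> x}"
proof (cases "\<exists>m\<in>A. \<forall>x\<in>A. x \<le> m")
  case True
  then obtain m where "m \<in> A" "\<forall>x\<in>A. x \<le> m" by blast
  moreover from this have "(GREATEST x. x \<in> A) = m" by (intro Greatest_equality) auto
  ultimately show ?thesis unfolding max_set_def by (auto intro: order.antisym)
qed (auto simp: max_set_def)

definition is_point :: "nat \<Rightarrow> wtm fm" where
  "is_point p = Conj (Neg (Eq (WVar p) WBot)) (Eq (WMin (WVar p)) (WVar p))"

definition ex_point :: "nat \<Rightarrow> wtm fm \<Rightarrow> wtm fm" where
  "ex_point p \<phi> = Ex p (Conj (is_point p) \<phi>)"

definition all_point :: "nat \<Rightarrow> wtm fm \<Rightarrow> wtm fm" where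
  "all_point p \<phi> = Neg (ex_point p (Neg \<phi>))"

definition point_le :: "nat \<Rightarrow> nat \<Rightarrow> wtm fm" where
  "point_le p q = Eq (WMin (WUn (WVar p) (WVar q))) (WVar p)"

definition point_less :: "nat \<Rightarrow> nat \<Rightarrow> wtm fm" where
  "point_less p q = Conj (point_le p q) (Neg (Eq (WVar p) (WVar q)))"

definition point_in :: "nat \<Rightarrow> nat \<Rightarrow> wtm fm" where
  "point_in p q = Eq (WInt (WVar p) (WVar q)) (WVar p)"

definition fm_false :: "wtm fm" where
  "fm_false = Neg (Eq WBot WBot)"

definition fm_imp :: "wtm fm \<Rightarrow> wtm fm \<Rightarrow> wtm fm" where
  "fm_imp \<phi> \<psi> = Disj (Neg \<phi>) \<psi>"

definition fm_iff :: "wtm fm \<Rightarrow> wtm fm \<Rightarrow> wtm fm" where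
  "fm_iff \<phi> \<psi> = Conj (fm_imp \<phi> \<psi>) (fm_imp \<psi> \<phi>)"

lemma Wsat_is_point: "Wsat \<tau> (is_point p) \<longleftrightarrow> (\<exists>x. \<tau> p = {x})"
proof
  assume "Wsat \<tau> (is_point p)"
  then obtain x where "x \<in> \<tau> p" and least: "\<forall>y\<in>\<tau> p. \<forall>z\<in>\<tau> p. y \<le> z"
    unfolding is_point_def by (auto simp: min_set_eq)
  then have "\<tau> p = {x}" using order.antisym by blast
  then show "\<exists>x. \<tau> p = {x}" ..
qed (auto simp: is_point_def min_set_eq)

lemma Wsat_ex_point: "Wsat \<tau> (ex_point p \<phi>) \<longleftrightarrow> (\<exists>x. Wsat (\<tau>(p := {x})) \<phi>)"
  by (auto simp: ex_point_def Wsat_is_point Wset_def)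

lemma Wsat_all_point: "Wsat \<tau> (all_point p \<phi>) \<longleftrightarrow> (\<forall>x. Wsat (\<tau>(p := {x})) \<phi>)"
  by (simp add: all_point_def Wsat_ex_point)

lemma Wsat_point_le: "\<tau> p = {x} \<Longrightarrow> \<tau> q = {y} \<Longrightarrow> Wsat \<tau> (point_le p q) \<longleftrightarrow> x \<le> y"
  by (auto simp: point_le_def min_set_eq)

lemma Wsat_point_less: "\<tau> p = {x} \<Longrightarrow> \<tau> q = {y} \<Longrightarrow> Wsat \<tau> (point_less p q) \<longleftrightarrow> x < y"
  by (auto simp: point_less_def Wsat_point_le)

lemma Wsat_point_in: "\<tau> p = {x} \<Longrightarrow> Wsat \<tau> (point_in p q) \<longleftrightarrow> x \<in> \<tau> q"
  by (auto simp: point_in_def)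

lemma Wsat_fm_false: "\<not> Wsat \<tau> fm_false"
  by (simp add: fm_false_def)

lemma Wsat_fm_imp: "Wsat \<tau> (fm_imp \<phi> \<psi>) \<longleftrightarrow> (Wsat \<tau> \<phi> \<longrightarrow> Wsat \<tau> \<psi>)"
  by (auto simp: fm_imp_def)

lemma Wsat_fm_iff: "Wsat \<tau> (fm_iff \<phi> \<psi>) \<longleftrightarrow> (Wsat \<tau> \<phi> \<longleftrightarrow> Wsat \<tau> \<psi>)"
  by (auto simp: fm_iff_def Wsat_fm_imp)

definition decode_asg :: "(nat \<Rightarrow> 'a::linorder set) \<Rightarrow> nat \<Rightarrow> 'a set" where
  "decode_asg \<tau> n = decode_endpoints (\<tau> (2 * n)) (\<tau> (Suc (2 * n)))"

lemma decode_asg_endpoint_asg: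
  fixes \<sigma> :: "nat \<Rightarrow> 'a::{dense_linorder,order_bot,no_top} set"
  assumes "\<forall>n. \<sigma> n \<in> Lset"
  shows "decode_asg (endpoint_asg \<sigma>) = \<sigma>"
  using assms by (simp add: fun_eq_iff decode_asg_def endpoint_asg_def decode_endpoints_lend_rend)

lemma decode_asg_update_pair:
  "decode_asg (\<tau>(2 * n := L, Suc (2 * n) := R)) = (decode_asg \<tau>)(n := decode_endpoints L R)"
  by (auto simp: decode_asg_def fun_eq_iff)

primrec ltm_bound :: "ltm \<Rightarrow> nat" where
  "ltm_bound (LVar n) = Suc n"
| "ltm_bound (LUn s t) = max (ltm_bound s) (ltm_bound t)"
| "ltm_bound (LInt s t) = max (ltm_bound s) (ltm_bound t)"
| "ltm_bound LBot = 0"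
| "ltm_bound LZero = 0"
| "ltm_bound (LMin t) = ltm_bound t"
| "ltm_bound (LMax t) = ltm_bound t"
| "ltm_bound (LL t) = ltm_bound t"
| "ltm_bound (LR t) = ltm_bound t"

primrec lfm_bound :: "ltm fm \<Rightarrow> nat" where
  "lfm_bound (Eq s t) = max (ltm_bound s) (ltm_bound t)"
| "lfm_bound (Neg \<phi>) = lfm_bound \<phi>"
| "lfm_bound (Conj \<phi> \<psi>) = max (lfm_bound \<phi>) (lfm_bound \<psi>)"
| "lfm_bound (Disj \<phi> \<psi>) = max (lfm_bound \<phi>) (lfm_bound \<psi>)"
| "lfm_bound (Ex x \<phi>) = max (Suc x) (lfm_bound \<phi>)"
| "lfm_bound (All x \<phi>) = max (Suc x) (lfm_bound \<phi>)"

lemma Leval_cong: "(\<And>n. n < ltm_bound t \<Longrightarrow> \<sigma> n = \<sigma>' n) \<Longrightarrow> Leval \<sigma> t = Leval \<sigma>' t"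
  by (induction t) auto

lemma Leval_decode_asg_update:
  "2 * ltm_bound t \<le> k \<Longrightarrow> Leval (decode_asg (\<tau>(k := A))) t = Leval (decode_asg \<tau>) t"
  by (rule Leval_cong) (auto simp: decode_asg_def)

text \<open>\<^term>\<open>mem_fm b t p\<close> says that the point held by variable p lies in t; the variables
  b, b + 1, \<dots> serve as bound point variables, so p and the variables of t must lie below b.\<close>
primrec mem_fm :: "nat \<Rightarrow> ltm \<Rightarrow> nat \<Rightarrow> wtm fm" where
  "mem_fm b (LVar n) p = ex_point b (Conj (point_in b (2 * n)) (Conj (point_le b p)
     (all_point (Suc b) (fm_imp (Conj (point_in (Suc b) (Suc (2 * n))) (point_le b (Suc b)))
       (point_le p (Suc b))))))"
| "mem_fm b (LUn s t) p = Disj (mem_fm b s p) (mem_fm b t p)"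
| "mem_fm b (LInt s t) p = Conj (mem_fm b s p) (mem_fm b t p)"
| "mem_fm b LBot p = fm_false"
| "mem_fm b LZero p = Eq (WVar p) WZero"
| "mem_fm b (LMin t) p =
     Conj (mem_fm b t p) (all_point b (fm_imp (mem_fm (Suc b) t b) (point_le p b)))"
| "mem_fm b (LMax t) p =
     Conj (mem_fm b t p) (all_point b (fm_imp (mem_fm (Suc b) t b) (point_le b p)))"
| "mem_fm b (LL t) p = Conj (mem_fm b t p) (all_point b (fm_imp (point_less b p)
     (ex_point (Suc b) (Conj (point_le b (Suc b)) (Conj (point_le (Suc b) p)
       (Neg (mem_fm (Suc (Suc b)) t (Suc b))))))))"
| "mem_fm b (LR t) p = Conj (mem_fm b t p) (all_point b (fm_imp (point_less p b)
     (ex_point (Suc b) (Conj (point_le p (Suc b)) (Conj (point_le (Suc b) b)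
       (Neg (mem_fm (Suc (Suc b)) t (Suc b))))))))"

lemma Wsat_mem_fm:
  fixes \<tau> :: "nat \<Rightarrow> 'a::{linorder,order_bot} set"
  assumes "2 * ltm_bound t \<le> b" "p < b" "\<tau> p = {x}"
  shows "Wsat \<tau> (mem_fm b t p) \<longleftrightarrow> x \<in> Leval (decode_asg \<tau>) t"
  using assms
proof (induction t arbitrary: b p \<tau> x)
  case (LVar n)
  then show ?case
    by (auto simp: Wsat_ex_point Wsat_all_point Wsat_point_in Wsat_point_le Wsat_fm_imp
        decode_asg_def decode_endpoints_def)
next
  case LBot
  then show ?case by (simp add: Wsat_fm_false)
next
  case LZero
  then show ?case by auto
next
  case (LMin t)
  have "Wsat (\<tau>(b := {y})) (mem_fm (Suc b) t b) \<longleftrightarrow> y \<in> Leval (decode_asg (\<tau>(b := {y}))) t" for y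
    using LMin.prems by (intro LMin.IH) auto
  then have "Wsat (\<tau>(b := {y})) (mem_fm (Suc b) t b) \<longleftrightarrow> y \<in> Leval (decode_asg \<tau>) t" for y
    using LMin.prems by (simp only: Leval_decode_asg_update ltm_bound.simps)
  then show ?case using LMin.IH[of b p \<tau> x] LMin.prems
    by (auto simp: Wsat_all_point Wsat_fm_imp Wsat_point_le min_set_eq)
next
  case (LMax t)
  have "Wsat (\<tau>(b := {y})) (mem_fm (Suc b) t b) \<longleftrightarrow> y \<in> Leval (decode_asg (\<tau>(b := {y}))) t" for y
    using LMax.prems by (intro LMax.IH) auto
  then have "Wsat (\<tau>(b := {y})) (mem_fm (Suc b) t b) \<longleftrightarrow> y \<in> Leval (decode_asg \<tau>) t" for y
    using LMax.prems by (simp only: Leval_decode_asg_update ltm_bound.simps)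
  then show ?case using LMax.IH[of b p \<tau> x] LMax.prems
    by (auto simp: Wsat_all_point Wsat_fm_imp Wsat_point_le max_set_eq)
next
  case (LL t)
  have "Wsat (\<tau>(b := {y}, Suc b := {w})) (mem_fm (Suc (Suc b)) t (Suc b))
      \<longleftrightarrow> w \<in> Leval (decode_asg (\<tau>(b := {y}, Suc b := {w}))) t" for y w
    using LL.prems by (intro LL.IH) auto
  then have "Wsat (\<tau>(b := {y}, Suc b := {w})) (mem_fm (Suc (Suc b)) t (Suc b))
      \<longleftrightarrow> w \<in> Leval (decode_asg \<tau>) t" for y w
    using LL.prems by (simp only: Leval_decode_asg_update ltm_bound.simps)
  then show ?case using LL.IH[of b p \<tau> x] LL.prems
    by (simp add: Wsat_all_point Wsat_ex_point Wsat_fm_imp Wsat_point_le Wsat_point_less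
        lend_def subset_iff)
next
  case (LR t)
  have "Wsat (\<tau>(b := {y}, Suc b := {w})) (mem_fm (Suc (Suc b)) t (Suc b))
      \<longleftrightarrow> w \<in> Leval (decode_asg (\<tau>(b := {y}, Suc b := {w}))) t" for y w
    using LR.prems by (intro LR.IH) auto
  then have "Wsat (\<tau>(b := {y}, Suc b := {w})) (mem_fm (Suc (Suc b)) t (Suc b))
      \<longleftrightarrow> w \<in> Leval (decode_asg \<tau>) t" for y w
    using LR.prems by (simp only: Leval_decode_asg_update ltm_bound.simps)
  then show ?case using LR.IH[of b p \<tau> x] LR.prems
    by (simp add: Wsat_all_point Wsat_ex_point Wsat_fm_imp Wsat_point_le Wsat_point_less
        rend_def subset_iff)
qed auto

primrec translate :: "nat \<Rightarrow> ltm fm \<Rightarrow> wtm fm" where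
  "translate b (Eq s t) = all_point b (fm_iff (mem_fm (Suc b) s b) (mem_fm (Suc b) t b))"
| "translate b (Neg \<phi>) = Neg (translate b \<phi>)"
| "translate b (Conj \<phi> \<psi>) = Conj (translate b \<phi>) (translate b \<psi>)"
| "translate b (Disj \<phi> \<psi>) = Disj (translate b \<phi>) (translate b \<psi>)"
| "translate b (Ex x \<phi>) = Ex (2 * x) (Ex (Suc (2 * x)) (translate b \<phi>))"
| "translate b (All x \<phi>) = All (2 * x) (All (Suc (2 * x)) (translate b \<phi>))"

lemma Wsat_translate:
  fixes \<tau> :: "nat \<Rightarrow> 'a::{dense_linorder,order_bot,no_top} set"
  assumes "2 * lfm_bound \<phi> \<le> b"
  shows "Wsat \<tau> (translate b \<phi>) \<longleftrightarrow> Lsat (decode_asg \<tau>) \<phi>"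
  using assms
proof (induction \<phi> arbitrary: \<tau>)
  case (Eq s t)
  have "Wsat (\<tau>(b := {x})) (mem_fm (Suc b) u b) \<longleftrightarrow> x \<in> Leval (decode_asg \<tau>) u"
    if "2 * ltm_bound u \<le> b" for u x
  proof -
    have "Wsat (\<tau>(b := {x})) (mem_fm (Suc b) u b) \<longleftrightarrow> x \<in> Leval (decode_asg (\<tau>(b := {x}))) u"
      using that by (intro Wsat_mem_fm) auto
    with that show ?thesis by (simp only: Leval_decode_asg_update)
  qed
  with Eq show ?case by (auto simp: Wsat_all_point Wsat_fm_iff)
next
  case (Ex x \<phi>)
  then have "2 * lfm_bound \<phi> \<le> b" by (simp add: max_def split: if_splits)
  with Ex.IH have "Wsat (\<tau>(2 * x := L, Suc (2 * x) := R)) (translate b \<phi>) \<longleftrightarrow>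
      Lsat ((decode_asg \<tau>)(x := decode_endpoints L R)) \<phi>" for L R
    by (simp add: decode_asg_update_pair)
  then show ?case by (simp add: Wset_def bex_Lset_iff)
next
  case (All x \<phi>)
  then have "2 * lfm_bound \<phi> \<le> b" by (simp add: max_def split: if_splits)
  with All.IH have "Wsat (\<tau>(2 * x := L, Suc (2 * x) := R)) (translate b \<phi>) \<longleftrightarrow>
      Lsat ((decode_asg \<tau>)(x := decode_endpoints L R)) \<phi>" for L R
    by (simp add: decode_asg_update_pair)
  then show ?case by (simp add: Wset_def ball_Lset_iff)
qed auto

theorem corollary6p5:
  fixes \<phi> :: "ltm fm"
  shows "\<exists>\<psi> :: wtm fm. \<forall>\<sigma> :: nat \<Rightarrow> 'a::{dense_linorder,order_bot,no_top} set.
           (\<forall>n. \<sigma> n \<in> Lset) \<longrightarrow> (Lsat \<sigma> \<phi> \<longleftrightarrow> Wsat (endpoint_asg \<sigma>) \<psi>)"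
proof (intro exI allI impI)
  fix \<sigma> :: "nat \<Rightarrow> 'a set"
  assume "\<forall>n. \<sigma> n \<in> Lset"
  then have "Lsat \<sigma> \<phi> \<longleftrightarrow> Lsat (decode_asg (endpoint_asg \<sigma>)) \<phi>"
    by (simp add: decode_asg_endpoint_asg)
  also have "\<dots> \<longleftrightarrow> Wsat (endpoint_asg \<sigma>) (translate (2 * lfm_bound \<phi>) \<phi>)"
    by (simp add: Wsat_translate)
  finally show "Lsat \<sigma> \<phi> \<longleftrightarrow> Wsat (endpoint_asg \<sigma>) (translate (2 * lfm_bound \<phi>) \<phi>)" .
qed

end
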